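(* Let $\alpha \in [0,1)$ and let $q_\alpha \in \mathcal{P}\big((1+\alpha)/2\big)$. Let $f \in \mathcal{B}$ be locally univalent (i.e. $f'(z)\neq 0$ for $z \in \mathbb{D}\setminus\{0\}$) and suppose that $$|S_f(z)| \leq 2\, q_\alpha(|z|) \quad \text{for all } z \in \mathbb{D}\setminus\{0\}.$$ Then $f \in \mathcal{BC}(\alpha)$. Moreover, the constant $(1+\alpha)/2$ is best possible: for every $\beta < (1+\alpha)/2$ there exist $q \in \mathcal{P}(\beta)$ and a locally univalent $f \in \mathcal{B}$ with $|S_f(z)| \le 2q(|z|)$ on $\mathbb{D}\setminus\{0\}$ such that $f \notin \mathcal{BC}(\alpha)$.
   Context: $\mathbb{D}=\{z\in\mathbb{C}:|z|<1\}$. $\mathcal{B}$ denotes the class of functions $f$ meromorphic in $\mathbb{D}$ of the form $f(z)=\frac1z+a_0+a_1z+a_2z^2+\cdots$ (analytic in $\mathbb{D}\setminus\{0\}$ with a simple pole of residue $1$ at $0$). For a locally univalent function $f$, the Schwarzian derivative is $S_f=\left(\frac{f''}{f'}\right)'-\frac12\left(\frac{f''}{f'}\right)^2$ (it extends analytically across $0$ for $f\in\mathcal B$). For $\alpha\in[0,1)$, $\mathcal{BC}(\alpha)$ is the class of $f\in\mathcal{B}$ with $f'(z)\neq0$ on $\mathbb{D}\setminus\{0\}$ and $\operatorname{Re}\left(1+\frac{zf''(z)}{f'(z)}\right)\le -\alpha$ for $z\in\mathbb{D}\setminus\{0\}$ (meromorphically convex functions of order $\alpha$). For $\gamma\ge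 0$, $\mathcal{P}(\gamma)$ is the class of continuous functions $q:[0,1)\to\mathbb{R}$ such that (a) $q(r)\ge0$ for all $r\in[0,1)$, and (b) the solution $y$ of $y''+qy=0$, $y(0)=0$, $y'(0)=1$, is positive on $(0,1)$ and satisfies $\lim_{x\to1^-} \frac{y'(x)}{y(x)}\ge\gamma$. *)

theory Defs
  imports "HOL-Complex_Analysis.Complex_Analysis" "HOL-Library.Extended_Real"
begin

text \<open>Class B: meromorphic in the unit disc, of the form 1/z + (holomorphic).
  The value of f at 0 is irrelevant (f is a total function in HOL).\<close>
definition classB :: "(complex \<Rightarrow> complex) \<Rightarrow> bool" where
  "classB f \<longleftrightarrow> (\<exists>g. g holomorphic_on ball 0 1 \<and>
      (\<forall>z\<in>ball 0 1 - {0}. f z = 1 / z + g z))"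

definition loc_univalent :: "(complex \<Rightarrow> complex) \<Rightarrow> bool" where
  "loc_univalent f \<longleftrightarrow> (\<forall>z\<in>ball 0 1 - {0}. deriv f z \<noteq> 0)"

definition schwarzian :: "(complex \<Rightarrow> complex) \<Rightarrow> complex \<Rightarrow> complex" where
  "schwarzian f z = deriv (\<lambda>w. deriv (deriv f) w / deriv f w) z
      - 1/2 * (deriv (deriv f) z / deriv f z)^2"

definition classBC :: "real \<Rightarrow> (complex \<Rightarrow> complex) \<Rightarrow> bool" where
  "classBC \<alpha> f \<longleftrightarrow> classB f \<and> loc_univalent f \<and>
     (\<forall>z\<in>ball 0 1 - {0}. Re (1 + z * deriv (deriv f) z / deriv f z) \<le> - \<alpha>)"

definition ode_sol :: "(real \<Rightarrow> real) \<Rightarrow> (real \<Rightarrow> real) \<Rightarrow> (real \<Rightarrow> real) \<Rightarrow> bool" where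
  "ode_sol q y y' \<longleftrightarrow> y 0 = 0 \<and> y' 0 = 1 \<and>
     (\<forall>x\<in>{0..<1}. (y has_real_derivative y' x) (at x within {0..<1}) \<and>
                    (y' has_real_derivative (- q x * y x)) (at x within {0..<1}))"

definition classP :: "real \<Rightarrow> (real \<Rightarrow> real) \<Rightarrow> bool" where
  "classP \<gamma> q \<longleftrightarrow> continuous_on {0..<1} q \<and> (\<forall>r\<in>{0..<1}. q r \<ge> 0) \<and>
     (\<forall>y y'. ode_sol q y y' \<longrightarrow>
        (\<forall>x\<in>{0<..<1}. y x > 0) \<and>
        (\<exists>L. ((\<lambda>x. ereal (y' x / y x)) \<longlongrightarrow> L) (at_left 1) \<and> L \<ge> ereal \<gamma>))"

end

theory Submission
  imports Defs
begin

text \<open>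
  Write \<open>f' = - exp (-2 M) / z\<^sup>2\<close> with \<open>M\<close> holomorphic in the disc, so that
  \<open>1 + z f''/f' = -1 - 2 z M'\<close>. The bound \<open>|S\<^sub>f| \<le> 2 q(|z|)\<close> becomes a Riccati-type
  inequality for \<open>M\<close> along every ray \<open>s \<omega>\<close>, and against the solution \<open>y\<close> of
  \<open>y'' + q y = 0\<close> (which exists by Picard iteration) it makes
  \<open>exp (Re M(s \<omega>)) ((1 + Re (s \<omega> M'(s \<omega>))) y(s) - s y'(s))\<close> nondecreasing from \<open>0\<close>.
  Hence \<open>Re (z M') \<ge> r y'(r)/y(r) - 1\<close> on \<open>|z| = r\<close>, and inside by the maximum principle;
  letting \<open>r \<rightarrow> 1\<close> gives \<open>Re (z M') \<ge> (\<alpha> - 1)/2\<close>, i.e. \<open>f \<in> BC(\<alpha>)\<close>.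
  For sharpness, \<open>f(z) = s cot (s z)\<close> has \<open>S\<^sub>f = 2 s\<^sup>2\<close>, the constant \<open>s\<^sup>2\<close> lies in
  \<open>P(s cot s)\<close>, and \<open>1 + t f''(t)/f'(t) \<rightarrow> 1 - 2 s cot s\<close> as \<open>t \<rightarrow> 1\<close>.
\<close>

section \<open>Existence of solutions by Picard iteration\<close>

text \<open>The \<open>n\<close>-th Picard corrections to \<open>y'\<close> and \<open>y\<close> for the system \<open>y' = z, z' = - q y\<close>,
  starting from \<open>z = 1, y = t\<close>.\<close>

primrec picard_z :: "(real \<Rightarrow> real) \<Rightarrow> nat \<Rightarrow> real \<Rightarrow> real" where
  "picard_z q 0 = (\<lambda>t. 1)"
| "picard_z q (Suc n) =
     (\<lambda>t. - integral {0..t} (\<lambda>s. q s * integral {0..s} (picard_z q n)))"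

definition picard_y :: "(real \<Rightarrow> real) \<Rightarrow> nat \<Rightarrow> real \<Rightarrow> real" where
  "picard_y q n t = integral {0..t} (picard_z q n)"

lemma picard_z_Suc: "picard_z q (Suc n) t = - integral {0..t} (\<lambda>s. q s * picard_y q n s)"
  by (simp add: picard_y_def)

declare picard_z.simps(2) [simp del]

lemma picard_y_0 [simp]: "picard_y q n 0 = 0"
  by (simp add: picard_y_def)

lemma picard_z_0: "picard_z q n 0 = (if n = 0 then 1 else 0)"
  by (cases n) (simp_all add: picard_z_Suc)

lemma picard_y_has_derivative:
  assumes "continuous_on {0..b} (picard_z q n)" "t \<in> {0..b}"
  shows "(picard_y q n has_real_derivative picard_z q n t) (at t within {0..b})"
  using integral_has_vector_derivative[OF assms]
  by (simp add: picard_y_def[abs_def] has_real_derivative_iff_has_vector_derivative)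

lemma picard_z_Suc_has_derivative:
  assumes "continuous_on {0..b} q" "continuous_on {0..b} (picard_y q n)" "t \<in> {0..b}"
  shows "(picard_z q (Suc n) has_real_derivative - q t * picard_y q n t) (at t within {0..b})"
proof -
  have "continuous_on {0..b} (\<lambda>s. q s * picard_y q n s)"
    using assms by (intro continuous_intros)
  from integral_has_vector_derivative[OF this assms(3)]
  have "((\<lambda>t. integral {0..t} (\<lambda>s. q s * picard_y q n s)) has_real_derivative q t * picard_y q n t)
      (at t within {0..b})"
    by (simp add: has_real_derivative_iff_has_vector_derivative)
  then show ?thesis
    unfolding picard_z_Suc[abs_def] by (auto intro: derivative_eq_intros)
qed

lemma picard_y_continuous:
  assumes "continuous_on {0..b} (picard_z q n)"
  shows "continuous_on {0..b} (picard_y q n)"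
  by (rule DERIV_continuous_on[OF picard_y_has_derivative[OF assms]])

lemma picard_z_continuous:
  assumes "continuous_on {0..b} q"
  shows "continuous_on {0..b} (picard_z q n)"
proof (induction n)
  case (Suc n)
  show ?case
    by (rule DERIV_continuous_on[OF picard_z_Suc_has_derivative[OF assms picard_y_continuous[OF Suc]]])
qed simp

lemma integral_power_bound:
  fixes h :: "real \<Rightarrow> real"
  assumes "continuous_on {0..t} h" "0 \<le> t"
    and "\<And>s. s \<in> {0..t} \<Longrightarrow> \<bar>h s\<bar> \<le> c * s ^ k / fact k"
  shows "\<bar>integral {0..t} h\<bar> \<le> c * t ^ Suc k / fact (Suc k)"
proof -
  have "((\<lambda>s. c * s ^ k / fact k) has_integral c * t ^ Suc k / fact (Suc k)) {0..t}"
  proof -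
    have "((\<lambda>s. c * s ^ Suc k / fact (Suc k)) has_real_derivative c * x ^ k / fact k)
        (at x within {0..t})" for x
    proof -
      have "fact (Suc k) = real (Suc k) * fact k" by simp
      then have "c * (real (Suc k) * x ^ k) / fact (Suc k) = c * x ^ k / fact k"
        by (simp del: fact_Suc of_nat_Suc)
      moreover have "((\<lambda>s. c * s ^ Suc k / fact (Suc k)) has_real_derivative
          c * (real (Suc k) * x ^ k) / fact (Suc k)) (at x within {0..t})"
        using DERIV_cdivide[OF DERIV_cmult[OF DERIV_pow[of "Suc k" x "{0..t}"]], of c "fact (Suc k)"]
        by simp
      ultimately show ?thesis by simp
    qed
    from fundamental_theorem_of_calculus[OF \<open>0 \<le> t\<close>, of "\<lambda>s. c * s ^ Suc k / fact (Suc k)"] this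
    show ?thesis by (simp add: has_real_derivative_iff_has_vector_derivative)
  qed
  then have "integral {0..t} (\<lambda>s. c * s ^ k / fact k) = c * t ^ Suc k / fact (Suc k)"
    by (rule integral_unique)
  moreover have "norm (integral {0..t} h) \<le> integral {0..t} (\<lambda>s. c * s ^ k / fact k)"
    using assms by (intro integral_norm_bound_integral integrable_continuous_real continuous_intros) auto
  ultimately show ?thesis by simp
qed

lemma picard_bounds:
  assumes q: "continuous_on {0..b} q" and Q: "\<forall>s\<in>{0..b}. \<bar>q s\<bar> \<le> Q"
    and t: "t \<in> {0..b}"
  shows "\<bar>picard_z q n t\<bar> \<le> Q ^ n * t ^ (2 * n) / fact (2 * n)"
    and "\<bar>picard_y q n t\<bar> \<le> Q ^ n * t ^ (2 * n + 1) / fact (2 * n + 1)"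
proof -
  have sub: "{0..s} \<subseteq> {0..b}" if "s \<in> {0..b}" for s
    using that by auto
  have y_bound: "\<bar>picard_y q n s\<bar> \<le> Q ^ n * s ^ (2 * n + 1) / fact (2 * n + 1)"
    if z_bound: "\<And>s. s \<in> {0..b} \<Longrightarrow> \<bar>picard_z q n s\<bar> \<le> Q ^ n * s ^ (2 * n) / fact (2 * n)"
      and s: "s \<in> {0..b}" for n s
  proof -
    have "\<bar>integral {0..s} (picard_z q n)\<bar> \<le> Q ^ n * s ^ Suc (2 * n) / fact (Suc (2 * n))"
      using s sub[OF s]
      by (intro integral_power_bound continuous_on_subset[OF picard_z_continuous[OF q]] z_bound) auto
    then show ?thesis by (simp add: picard_y_def)
  qed
  have z_bound: "\<bar>picard_z q n s\<bar> \<le> Q ^ n * s ^ (2 * n) / fact (2 * n)"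
    if "s \<in> {0..b}" for s
    using that
  proof (induction n arbitrary: s)
    case (Suc n)
    have "\<bar>q r * picard_y q n r\<bar> \<le> Q ^ Suc n * r ^ (2 * n + 1) / fact (2 * n + 1)"
      if "r \<in> {0..s}" for r
    proof -
      have r: "r \<in> {0..b}" using that sub[OF Suc.prems] by auto
      have "\<bar>q r\<bar> * \<bar>picard_y q n r\<bar> \<le> Q * (Q ^ n * r ^ (2 * n + 1) / fact (2 * n + 1))"
        using Q r y_bound[OF Suc.IH r] by (intro mult_mono) auto
      then show ?thesis by (simp add: abs_mult)
    qed
    then have "\<bar>integral {0..s} (\<lambda>r. q r * picard_y q n r)\<bar>
        \<le> Q ^ Suc n * s ^ Suc (2 * n + 1) / fact (Suc (2 * n + 1))"
      using Suc.prems sub[OF Suc.prems]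
      by (intro integral_power_bound continuous_intros continuous_on_subset[OF q]
          continuous_on_subset[OF picard_y_continuous[OF picard_z_continuous[OF q]]]) auto
    then show ?case by (simp add: picard_z_Suc)
  qed simp
  show "\<bar>picard_z q n t\<bar> \<le> Q ^ n * t ^ (2 * n) / fact (2 * n)"
    using z_bound[OF t] .
  show "\<bar>picard_y q n t\<bar> \<le> Q ^ n * t ^ (2 * n + 1) / fact (2 * n + 1)"
    using y_bound[OF z_bound t] .
qed

lemma picard_bounds_uniform:
  assumes q: "continuous_on {0..b} q" and Q: "\<forall>s\<in>{0..b}. \<bar>q s\<bar> \<le> Q"
    and "b \<le> 1" and t: "t \<in> {0..b}"
  shows "\<bar>picard_z q n t\<bar> \<le> Q ^ n / fact n"
    and "\<bar>q t * picard_y q n t\<bar> \<le> Q ^ Suc n / fact (Suc n)"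
proof -
  have "0 \<le> Q" using Q t by fastforce
  have t1: "t ^ k \<le> 1" for k using t \<open>b \<le> 1\<close> by (intro power_le_one) auto
  have "Q ^ n * t ^ (2 * n) / fact (2 * n) \<le> Q ^ n * 1 / fact n"
    using \<open>0 \<le> Q\<close> t t1 by (intro frac_le mult_left_mono fact_mono) auto
  then show "\<bar>picard_z q n t\<bar> \<le> Q ^ n / fact n"
    using picard_bounds(1)[OF q Q t, of n] by simp
  have "Q ^ n * t ^ (2 * n + 1) / fact (2 * n + 1) \<le> Q ^ n * 1 / fact (Suc n)"
    using \<open>0 \<le> Q\<close> t t1[of "2 * n + 1"] by (intro frac_le mult_left_mono fact_mono) auto
  then have "\<bar>q t\<bar> * \<bar>picard_y q n t\<bar> \<le> Q * (Q ^ n / fact (Suc n))"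
    using picard_bounds(2)[OF q Q t, of n] Q t \<open>0 \<le> Q\<close> by (intro mult_mono) auto
  then show "\<bar>q t * picard_y q n t\<bar> \<le> Q ^ Suc n / fact (Suc n)"
    by (simp add: abs_mult)
qed

lemma has_real_derivative_suminf:
  fixes f f' :: "nat \<Rightarrow> real \<Rightarrow> real"
  assumes f': "\<And>n x. x \<in> {a..b} \<Longrightarrow> (f n has_real_derivative f' n x) (at x within {a..b})"
    and M: "\<And>n x. x \<in> {a..b} \<Longrightarrow> \<bar>f' n x\<bar> \<le> M n" "summable M"
    and "summable (\<lambda>n. f n a)" and x: "x \<in> {a..b}"
  shows "summable (\<lambda>n. f n x)"
    and "((\<lambda>x. \<Sum>n. f n x) has_real_derivative (\<Sum>n. f' n x)) (at x within {a..b})"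
proof -
  have "uniform_limit {a..b} (\<lambda>n x. \<Sum>i<n. f' i x) (\<lambda>x. \<Sum>n. f' n x) sequentially"
    using M by (intro Weierstrass_m_test) auto
  moreover have "a \<in> {a..b}" using x by simp
  ultimately obtain g where g: "\<And>x. x \<in> {a..b} \<Longrightarrow>
      (\<lambda>n. f n x) sums g x \<and> (g has_real_derivative (\<Sum>n. f' n x)) (at x within {a..b})"
    using has_field_derivative_series[OF _ f' _ _ \<open>summable (\<lambda>n. f n a)\<close>] by blast
  then show "summable (\<lambda>n. f n x)" using x sums_summable by blast
  show "((\<lambda>x. \<Sum>n. f n x) has_real_derivative (\<Sum>n. f' n x)) (at x within {a..b})"
  proof (rule has_field_derivative_transform_within[OF _ zero_less_one x])
    show "(g has_real_derivative (\<Sum>n. f' n x)) (at x within {a..b})" using g[OF x] by blast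
    show "g y = (\<Sum>n. f n y)" if "y \<in> {a..b}" for y using g[OF that] sums_unique by metis
  qed
qed

lemma picard_series_has_derivative:
  assumes q: "continuous_on {0..b} q" and "b \<le> 1" and x: "x \<in> {0..b}"
  shows "((\<lambda>t. \<Sum>n. picard_y q n t) has_real_derivative (\<Sum>n. picard_z q n x)) (at x within {0..b})"
    and "((\<lambda>t. \<Sum>n. picard_z q n t) has_real_derivative - q x * (\<Sum>n. picard_y q n x))
          (at x within {0..b})"
proof -
  obtain Q where "\<And>s. s \<in> {0..b} \<Longrightarrow> norm (q s) \<le> Q"
    using continuous_on_compact_bound[OF compact_Icc q] by blast
  then have "\<forall>s\<in>{0..b}. \<bar>q s\<bar> \<le> Q" by simp
  note bounds = picard_bounds_uniform[OF q this \<open>b \<le> 1\<close>]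
  have majorant: "summable (\<lambda>n. Q ^ n / fact n)"
    using summable_exp[of Q] by (simp add: field_simps)
  have dy: "(picard_y q n has_real_derivative picard_z q n t) (at t within {0..b})"
    if "t \<in> {0..b}" for n t
    using picard_y_has_derivative[OF picard_z_continuous[OF q] that] .
  have z_bound: "\<bar>picard_z q n t\<bar> \<le> Q ^ n / fact n" if "t \<in> {0..b}" for n t
    using bounds(1)[OF that] .
  have Y: "summable (\<lambda>n. picard_y q n x)"
    "((\<lambda>t. \<Sum>n. picard_y q n t) has_real_derivative (\<Sum>n. picard_z q n x)) (at x within {0..b})"
    by (rule has_real_derivative_suminf[OF dy z_bound majorant _ x]; simp)+
  then show "((\<lambda>t. \<Sum>n. picard_y q n t) has_real_derivative (\<Sum>n. picard_z q n x))
      (at x within {0..b})" by blast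
  define dz where "dz n t = (case n of 0 \<Rightarrow> 0 | Suc m \<Rightarrow> - q t * picard_y q m t)" for n t
  have dz: "(picard_z q n has_real_derivative dz n t) (at t within {0..b})" if "t \<in> {0..b}" for n t
    using picard_z_Suc_has_derivative[OF q picard_y_continuous[OF picard_z_continuous[OF q]] that]
    by (cases n) (auto simp: dz_def)
  have dz_bound: "\<bar>dz n t\<bar> \<le> Q ^ n / fact n" if "t \<in> {0..b}" for n t
    using bounds(2)[OF that] by (cases n) (auto simp: dz_def)
  have z0: "summable (\<lambda>n. picard_z q n 0)"
    using sums_single[of 0 "\<lambda>_. 1::real"] by (simp add: picard_z_0 sums_iff)
  have "((\<lambda>t. \<Sum>n. picard_z q n t) has_real_derivative (\<Sum>n. dz n x)) (at x within {0..b})"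
    by (rule has_real_derivative_suminf(2)[OF dz dz_bound majorant _ x]; use z0 in simp)
  moreover have "(\<lambda>m. dz (Suc m) x) sums (- q x * (\<Sum>n. picard_y q n x))"
    using sums_mult[OF summable_sums[OF Y(1)], of "- q x"] by (simp add: dz_def)
  from sums_Suc[OF this] have "(\<lambda>n. dz n x) sums (- q x * (\<Sum>n. picard_y q n x))"
    by (simp add: dz_def)
  ultimately show "((\<lambda>t. \<Sum>n. picard_z q n t) has_real_derivative - q x * (\<Sum>n. picard_y q n x))
      (at x within {0..b})"
    by (simp add: sums_iff)
qed

theorem ode_sol_exists:
  assumes q: "continuous_on {0..<1} q"
  shows "ode_sol q (\<lambda>t. \<Sum>n. picard_y q n t) (\<lambda>t. \<Sum>n. picard_z q n t)"
  unfolding ode_sol_def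
proof (intro conjI ballI)
  show "(\<Sum>n. picard_y q n 0) = 0" by simp
  show "(\<Sum>n. picard_z q n 0) = 1"
    using sums_single[of 0 "\<lambda>_. 1::real"] by (simp add: picard_z_0 sums_iff)
  fix x :: real assume x: "x \<in> {0..<1}"
  define b where "b = (1 + x) / 2"
  have b: "x \<in> {0..b}" "x < b" "b < 1" using x by (auto simp: b_def)
  have "continuous_on {0..b} q" using q b by (auto elim!: continuous_on_subset)
  note series = picard_series_has_derivative[OF this less_imp_le[OF b(3)] b(1)]
  have "at x within {0..b} = at x within {0..<1}"
    by (rule at_within_nhd[where S="{..<b}"]) (use b in auto)
  with series show "((\<lambda>t. \<Sum>n. picard_y q n t) has_real_derivative (\<Sum>n. picard_z q n x))
      (at x within {0..<1})"
    and "((\<lambda>t. \<Sum>n. picard_z q n t) has_real_derivative - q x * (\<Sum>n. picard_y q n x))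
      (at x within {0..<1})"
    by simp_all
qed

section \<open>The Schwarzian of a function of class B\<close>

lemma schwarzian_eqI:
  fixes f :: "complex \<Rightarrow> complex"
  assumes S: "open S" "z \<in> S"
    and f1: "\<And>w. w \<in> S \<Longrightarrow> deriv f w = f1 w"
    and f2: "\<And>w. w \<in> S \<Longrightarrow> (f1 has_field_derivative f2 w) (at w)"
    and R: "\<And>w. w \<in> S \<Longrightarrow> f2 w / f1 w = R w"
    and R': "(R has_field_derivative R') (at z)"
  shows "deriv (deriv f) z / deriv f z = R z"
    and "schwarzian f z = R' - (R z)\<^sup>2 / 2"
proof -
  have near: "eventually (\<lambda>w. w \<in> S) (nhds w)" if "w \<in> S" for w
    using S(1) that by (rule eventually_nhds_in_open)
  have ratio: "deriv (deriv f) w / deriv f w = R w" if "w \<in> S" for w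
  proof -
    have "deriv (deriv f) w = deriv f1 w"
      using near[OF that] f1 by (intro deriv_cong_ev) (auto elim: eventually_mono)
    also have "\<dots> = f2 w" using f2[OF that] by (rule DERIV_imp_deriv)
    finally show ?thesis using f1[OF that] R[OF that] by simp
  qed
  then show "deriv (deriv f) z / deriv f z = R z" using S(2) .
  have "deriv (\<lambda>w. deriv (deriv f) w / deriv f w) z = deriv R z"
    using near[OF S(2)] ratio by (intro deriv_cong_ev) (auto elim: eventually_mono)
  also have "\<dots> = R'" using R' by (rule DERIV_imp_deriv)
  finally show "schwarzian f z = R' - (R z)\<^sup>2 / 2"
    unfolding schwarzian_def ratio[OF S(2)] by simp
qed

lemma classB_deriv_exp_form:
  assumes "classB f" "loc_univalent f"
  obtains M where "M holomorphic_on ball 0 1"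
    "\<And>w. w \<in> ball 0 1 - {0} \<Longrightarrow> deriv f w = - exp (-2 * M w) / w\<^sup>2"
proof -
  obtain g where g: "g holomorphic_on ball 0 1"
    and fg: "\<And>z. z \<in> ball 0 1 - {0} \<Longrightarrow> f z = 1 / z + g z"
    using assms(1) by (auto simp: classB_def)
  have df: "deriv f w = - 1 / w\<^sup>2 + deriv g w" if w: "w \<in> ball 0 1 - {0}" for w
  proof -
    have "((\<lambda>w. 1 / w + g w) has_field_derivative - 1 / w\<^sup>2 + deriv g w) (at w)"
      using w holomorphic_derivI[OF g open_ball, of w]
      by (auto intro!: derivative_eq_intros simp: power2_eq_square)
    then have "(f has_field_derivative - 1 / w\<^sup>2 + deriv g w) (at w)"
      by (rule has_field_derivative_transform_within_open[OF _ open_delete[OF open_ball] w])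
        (simp add: fg)
    then show ?thesis by (rule DERIV_imp_deriv)
  qed
  \<comment> \<open>\<open>h\<close> extends \<open>- w\<^sup>2 f'(w)\<close> across \<open>0\<close> with \<open>h 0 = 1\<close>, so it has a holomorphic logarithm.\<close>
  define h where "h w = 1 - w\<^sup>2 * deriv g w" for w
  have h: "h holomorphic_on ball 0 1"
    unfolding h_def using g by (auto intro!: holomorphic_intros)
  have h_eq: "h w = - w\<^sup>2 * deriv f w" if "w \<in> ball 0 1 - {0}" for w
    using that by (auto simp: h_def df field_simps)
  have "h w \<noteq> 0" if "w \<in> ball 0 1" for w
  proof (cases "w = 0")
    case False
    with that assms(2) show ?thesis by (simp add: h_eq loc_univalent_def)
  qed (simp add: h_def)
  then obtain L where L: "L holomorphic_on ball 0 1" and hL: "\<And>w. w \<in> ball 0 1 \<Longrightarrow> h w = exp (L w)"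
    using contractible_imp_holomorphic_log[OF h convex_imp_contractible[OF convex_ball]] by blast
  show ?thesis
  proof
    show "(\<lambda>w. (L 0 - L w) / 2) holomorphic_on ball 0 1"
      using L by (auto intro!: holomorphic_intros)
    fix w :: complex assume w: "w \<in> ball 0 1 - {0}"
    define E where "E = exp (-2 * ((L 0 - L w) / 2))"
    have "E = exp (L w) / exp (L 0)"
      unfolding E_def exp_diff[symmetric] by (rule arg_cong[where f=exp]) simp
    also have "\<dots> = h w / h 0" using hL[of w] hL[of 0] w by simp
    also have "\<dots> = - w\<^sup>2 * deriv f w" using h_eq[OF w] by (simp add: h_def)
    finally show "deriv f w = - E / w\<^sup>2"
      using w by (simp add: field_simps)
  qed
qed

lemma schwarzian_exp_form:
  fixes f M :: "complex \<Rightarrow> complex"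
  assumes M: "M holomorphic_on ball 0 1"
    and df: "\<And>w. w \<in> ball 0 1 - {0} \<Longrightarrow> deriv f w = - exp (-2 * M w) / w\<^sup>2"
    and z: "z \<in> ball 0 1 - {0}"
  shows "deriv (deriv f) z / deriv f z = -2 * deriv M z - 2 / z"
    and "schwarzian f z = -2 * deriv (deriv M) z - 2 * (deriv M z)\<^sup>2 - 4 * deriv M z / z"
proof -
  have dM: "(M has_field_derivative deriv M w) (at w)"
    and dM': "(deriv M has_field_derivative deriv (deriv M) w) (at w)" if "w \<in> ball 0 1" for w
    using that M by (auto intro!: holomorphic_derivI holomorphic_intros)
  let ?f2 = "\<lambda>w. exp (-2 * M w) * (2 * deriv M w / w\<^sup>2 + 2 / w ^ 3)"
  let ?R = "\<lambda>w. -2 * deriv M w - 2 / w"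
  have f2: "((\<lambda>w. - exp (-2 * M w) / w\<^sup>2) has_field_derivative ?f2 w) (at w)"
    if "w \<in> ball 0 1 - {0}" for w
    using that dM[of w]
    by (auto intro!: derivative_eq_intros simp: field_simps power2_eq_square power3_eq_cube)
  have R: "?f2 w / (- exp (-2 * M w) / w\<^sup>2) = ?R w" if "w \<in> ball 0 1 - {0}" for w
    using that by (simp add: field_simps power2_eq_square power3_eq_cube)
  have R': "(?R has_field_derivative -2 * deriv (deriv M) z + 2 / z\<^sup>2) (at z)"
    using z dM'[of z] by (auto intro!: derivative_eq_intros simp: power2_eq_square)
  note S = open_delete[OF open_ball] z df f2 R R'
  show "deriv (deriv f) z / deriv f z = -2 * deriv M z - 2 / z"
    using S by (rule schwarzian_eqI(1))
  have "schwarzian f z = -2 * deriv (deriv M) z + 2 / z\<^sup>2 - (?R z)\<^sup>2 / 2"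
    using S by (rule schwarzian_eqI(2))
  also have "\<dots> = -2 * deriv (deriv M) z - 2 * (deriv M z)\<^sup>2 - 4 * deriv M z / z"
    using z by (simp add: field_simps power2_eq_square)
  finally show "schwarzian f z = -2 * deriv (deriv M) z - 2 * (deriv M z)\<^sup>2 - 4 * deriv M z / z" .
qed

definition riccati_ineq :: "(complex \<Rightarrow> complex) \<Rightarrow> (real \<Rightarrow> real) \<Rightarrow> complex \<Rightarrow> bool" where
  "riccati_ineq M q z \<longleftrightarrow>
     0 \<le> Re (2 * z * deriv M z + z\<^sup>2 * deriv (deriv M) z) + (Re (z * deriv M z))\<^sup>2
          + (cmod z)\<^sup>2 * q (cmod z)"

lemma schwarzian_bound_imp_riccati_ineq:
  fixes f M :: "complex \<Rightarrow> complex"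
  assumes M: "M holomorphic_on ball 0 1"
    and df: "\<And>w. w \<in> ball 0 1 - {0} \<Longrightarrow> deriv f w = - exp (-2 * M w) / w\<^sup>2"
    and z: "z \<in> ball 0 1 - {0}"
    and S: "cmod (schwarzian f z) \<le> 2 * q (cmod z)"
  shows "riccati_ineq M q z"
proof -
  define a s where "a = z * deriv M z" and "s = z\<^sup>2 * schwarzian f z"
  have Sz: "schwarzian f z = -2 * deriv (deriv M) z - 2 * (deriv M z)\<^sup>2 - 4 * deriv M z / z"
    using M df z by (rule schwarzian_exp_form(2))
  have "2 * z * deriv M z + z\<^sup>2 * deriv (deriv M) z = - s / 2 - a\<^sup>2"
    unfolding a_def s_def Sz using z by (simp add: field_simps power2_eq_square)
  then have "Re (2 * z * deriv M z + z\<^sup>2 * deriv (deriv M) z) = - Re s / 2 - Re (a\<^sup>2)"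
    by simp
  moreover have "Re s \<le> (cmod z)\<^sup>2 * (2 * q (cmod z))"
  proof -
    have "Re s \<le> (cmod z)\<^sup>2 * cmod (schwarzian f z)"
      using complex_Re_le_cmod[of s] by (simp add: s_def norm_mult norm_power)
    also have "\<dots> \<le> (cmod z)\<^sup>2 * (2 * q (cmod z))" using S by (intro mult_left_mono) auto
    finally show ?thesis .
  qed
  moreover have "Re (a\<^sup>2) \<le> (Re a)\<^sup>2" by (simp add: power2_eq_square)
  ultimately show ?thesis unfolding riccati_ineq_def a_def by linarith
qed

section \<open>Comparison with the differential equation\<close>

lemma riccati_comparison:
  fixes m m' m'' q y y' :: "real \<Rightarrow> real"
  assumes t: "0 < t"
    and dm: "\<And>s. s \<in> {0..t} \<Longrightarrow> (m has_real_derivative m' s) (at s within {0..t})"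
    and dm': "\<And>s. s \<in> {0..t} \<Longrightarrow> (m' has_real_derivative m'' s) (at s within {0..t})"
    and dy: "\<And>s. s \<in> {0..t} \<Longrightarrow> (y has_real_derivative y' s) (at s within {0..t})"
    and dy': "\<And>s. s \<in> {0..t} \<Longrightarrow> (y' has_real_derivative - q s * y s) (at s within {0..t})"
    and y0: "y 0 = 0" and y_nonneg: "\<And>s. s \<in> {0<..<t} \<Longrightarrow> 0 \<le> y s"
    and ineq: "\<And>s. s \<in> {0<..<t} \<Longrightarrow> 0 \<le> 2 * m' s + s * m'' s + s * (m' s)\<^sup>2 + s * q s"
  shows "t * y' t \<le> (1 + t * m' t) * y t"
proof -
  define H where "H s = exp (m s) * (y s + s * m' s * y s - s * y' s)" for s
  have dH: "(H has_real_derivative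
      exp (m s) * y s * (2 * m' s + s * m'' s + s * (m' s)\<^sup>2 + s * q s)) (at s within {0..t})"
    if "s \<in> {0..t}" for s
    unfolding H_def
    by (rule derivative_eq_intros dm dy dm' dy' refl that | simp add: algebra_simps power2_eq_square)+
  have "H 0 \<le> H t"
  proof (rule DERIV_nonneg_imp_increasing_open[OF less_imp_le[OF t]])
    show "continuous_on {0..t} H" using dH by (rule DERIV_continuous_on)
    fix s assume s: "0 < s" "s < t"
    then have "(H has_real_derivative
        exp (m s) * y s * (2 * m' s + s * m'' s + s * (m' s)\<^sup>2 + s * q s)) (at s)"
      using dH[of s] by (simp add: at_within_Icc_at)
    moreover have "0 \<le> exp (m s) * y s * (2 * m' s + s * m'' s + s * (m' s)\<^sup>2 + s * q s)"
      using s y_nonneg ineq by simp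
    ultimately show "\<exists>D. (H has_real_derivative D) (at s) \<and> 0 \<le> D" by blast
  qed
  then have "0 \<le> y t + t * m' t * y t - t * y' t"
    by (simp add: H_def y0 zero_le_mult_iff)
  then show ?thesis by (simp add: algebra_simps)
qed

lemma has_real_derivative_Re_ray:
  fixes G :: "complex \<Rightarrow> complex"
  assumes "G holomorphic_on S" "open S" "of_real s * \<omega> \<in> S"
  shows "((\<lambda>s. Re (c * G (of_real s * \<omega>))) has_real_derivative
            Re (c * \<omega> * deriv G (of_real s * \<omega>))) (at s within T)"
proof -
  have "(G has_field_derivative deriv G (of_real s * \<omega>)) (at (of_real s * \<omega>))"
    using assms by (rule holomorphic_derivI)
  then have "((\<lambda>z. G (z * \<omega>)) has_field_derivative deriv G (of_real s * \<omega>) * \<omega>)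
      (at (of_real s))"
    by (rule DERIV_chain2) (auto intro!: derivative_eq_intros)
  then have "((\<lambda>z. c * G (z * \<omega>)) has_field_derivative c * (deriv G (of_real s * \<omega>) * \<omega>))
      (at (of_real s))"
    by (rule DERIV_cmult)
  from has_field_derivative_Re[OF has_vector_derivative_real_field[OF this]]
  show ?thesis by (simp add: mult_ac)
qed

lemma ray_comparison:
  fixes M :: "complex \<Rightarrow> complex"
  assumes M: "M holomorphic_on ball 0 1"
    and ode: "ode_sol q y y'" and ypos: "\<forall>x\<in>{0<..<1}. 0 < y x"
    and riccati: "\<And>z. z \<in> ball 0 1 - {0} \<Longrightarrow> riccati_ineq M q z"
    and \<omega>: "cmod \<omega> = 1" and t: "0 < t" "t < 1"
  shows "t * y' t \<le> (1 + Re (of_real t * \<omega> * deriv M (of_real t * \<omega>))) * y t"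
proof -
  define m where "m s = Re (M (of_real s * \<omega>))" for s
  define m' where "m' s = Re (\<omega> * deriv M (of_real s * \<omega>))" for s
  define m'' where "m'' s = Re (\<omega> * \<omega> * deriv (deriv M) (of_real s * \<omega>))" for s
  have ray: "of_real s * \<omega> \<in> ball 0 1" if "s \<in> {0..t}" for s
    using that t \<omega> by (auto simp: norm_mult)
  have sub: "{0..t} \<subseteq> {0..<1}" using t by auto
  have "t * y' t \<le> (1 + t * m' t) * y t"
  proof (rule riccati_comparison[OF t(1)])
    show "(m has_real_derivative m' s) (at s within {0..t})" if "s \<in> {0..t}" for s
      unfolding m_def m'_def using has_real_derivative_Re_ray[OF M open_ball ray[OF that], of 1]
      by (simp only: mult_1_left)
    show "(m' has_real_derivative m'' s) (at s within {0..t})" if "s \<in> {0..t}" for s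
      unfolding m'_def m''_def
      using has_real_derivative_Re_ray[OF holomorphic_deriv[OF M open_ball] open_ball ray[OF that]] .
    show "(y has_real_derivative y' s) (at s within {0..t})"
      and "(y' has_real_derivative - q s * y s) (at s within {0..t})" if "s \<in> {0..t}" for s
    proof -
      have "s \<in> {0..<1}" using that sub by blast
      with ode show "(y has_real_derivative y' s) (at s within {0..t})"
        and "(y' has_real_derivative - q s * y s) (at s within {0..t})"
        unfolding ode_sol_def by (meson has_field_derivative_subset sub)+
    qed
    show "y 0 = 0" using ode by (simp add: ode_sol_def)
    show "0 \<le> y s" if "s \<in> {0<..<t}" for s
      using that t ypos by (simp add: less_imp_le)
    show "0 \<le> 2 * m' s + s * m'' s + s * (m' s)\<^sup>2 + s * q s" if s: "s \<in> {0<..<t}" for s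
    proof -
      define z where "z = of_real s * \<omega>"
      define A C where "A = \<omega> * deriv M z" and "C = \<omega> * \<omega> * deriv (deriv M) z"
      have "2 * z * deriv M z + z\<^sup>2 * deriv (deriv M) z = of_real (2 * s) * A + of_real (s\<^sup>2) * C"
        and "z * deriv M z = of_real s * A"
        by (simp_all add: z_def A_def C_def algebra_simps power2_eq_square)
      moreover have "cmod z = s" using s \<omega> by (simp add: z_def norm_mult)
      moreover have "z \<in> ball 0 1 - {0}" using ray[of s] s \<omega> by (auto simp: z_def)
      ultimately have "0 \<le> 2 * s * Re A + s\<^sup>2 * Re C + (s * Re A)\<^sup>2 + s\<^sup>2 * q s"
        using riccati[of z] by (simp add: riccati_ineq_def)
      moreover have "m' s = Re A" "m'' s = Re C" by (simp_all add: m'_def m''_def A_def C_def z_def)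
      ultimately have "0 \<le> 2 * s * m' s + s\<^sup>2 * m'' s + (s * m' s)\<^sup>2 + s\<^sup>2 * q s" by simp
      then have "0 \<le> s * (2 * m' s + s * m'' s + s * (m' s)\<^sup>2 + s * q s)"
        by (simp add: algebra_simps power2_eq_square)
      then show ?thesis using s by (simp add: zero_le_mult_iff)
    qed
  qed
  then show ?thesis by (simp add: m'_def mult.assoc)
qed

lemma Re_zderiv_lower_bound:
  fixes M :: "complex \<Rightarrow> complex"
  assumes M: "M holomorphic_on ball 0 1"
    and ode: "ode_sol q y y'" and ypos: "\<forall>x\<in>{0<..<1}. 0 < y x"
    and riccati: "\<And>z. z \<in> ball 0 1 - {0} \<Longrightarrow> riccati_ineq M q z"
    and r: "cmod z0 < r" "r < 1"
  shows "r * (y' r / y r) \<le> 1 + Re (z0 * deriv M z0)"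
proof -
  have r0: "0 < r" using r(1) by (meson le_less_trans norm_ge_zero)
  have yr: "0 < y r" using ypos r0 r(2) by simp
  have F: "(\<lambda>z. - (z * deriv M z)) holomorphic_on ball 0 1"
    using M by (auto intro!: holomorphic_intros)
  have "Re (- (z0 * deriv M z0)) \<le> 1 - r * (y' r / y r)"
  proof (rule maximum_real_frontier[where S="ball 0 r" and f="\<lambda>z. - (z * deriv M z)"])
    show "(\<lambda>z. - (z * deriv M z)) holomorphic_on interior (ball 0 r)"
      using holomorphic_on_subset[OF F] r(2) by (simp add: subset_ball)
    show "continuous_on (closure (ball 0 r)) (\<lambda>z. - (z * deriv M z))"
      using holomorphic_on_imp_continuous_on[OF F] r(2) r0 by (auto elim!: continuous_on_subset)
    show "z0 \<in> ball 0 r" using r(1) by simp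
    fix z :: complex assume "z \<in> frontier (ball 0 r)"
    then have z: "cmod z = r" using r0 by simp
    have \<omega>: "cmod (z / of_real r) = 1" and z_eq: "of_real r * (z / of_real r) = z"
      using z r0 by (simp_all add: norm_divide)
    have "r * y' r \<le> (1 + Re (z * deriv M z)) * y r"
      using ray_comparison[OF M ode ypos riccati \<omega> r0 r(2)] unfolding z_eq .
    then show "Re (- (z * deriv M z)) \<le> 1 - r * (y' r / y r)"
      using yr by (simp add: field_simps)
  qed simp
  then show ?thesis by simp
qed

lemma lower_limit_le_of_mult_bound:
  fixes g :: "real \<Rightarrow> real"
  assumes lim: "((\<lambda>r. ereal (g r)) \<longlongrightarrow> L) (at_left 1)" and "ereal \<gamma> \<le> L"
    and bound: "\<forall>\<^sub>F r in at_left 1. r * g r \<le> c"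
  shows "\<gamma> \<le> c"
proof (rule dense_le)
  fix d assume "d < \<gamma>"
  then have "ereal d < ereal \<gamma>" by simp
  from this \<open>ereal \<gamma> \<le> L\<close> have "ereal d < L" by (rule less_le_trans)
  from order_tendstoD(1)[OF lim this] have "\<forall>\<^sub>F r in at_left 1. d < g r" by simp
  moreover have "\<forall>\<^sub>F r in at_left (1::real). r \<in> {0<..<1}"
    by (rule eventually_at_left_real) simp
  ultimately have "\<forall>\<^sub>F r in at_left 1. r * d \<le> c"
    using bound
  proof eventually_elim
    case (elim r)
    then have "r * d \<le> r * g r" by (intro mult_left_mono) auto
    with elim show ?case by linarith
  qed
  moreover have "((\<lambda>r. r * d) \<longlongrightarrow> 1 * d) (at_left 1)"
    by (intro tendsto_intros)
  ultimately show "d \<le> c"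
    by (intro tendsto_upperbound[where F="at_left 1"]) auto
qed

theorem classBC_if_schwarzian_bound:
  assumes P: "classP ((1 + \<alpha>) / 2) q" and "classB f" "loc_univalent f"
    and S: "\<forall>z\<in>ball 0 1 - {0}. cmod (schwarzian f z) \<le> 2 * q (cmod z)"
  shows "classBC \<alpha> f"
proof -
  obtain M where M: "M holomorphic_on ball 0 1"
    and df: "\<And>w. w \<in> ball 0 1 - {0} \<Longrightarrow> deriv f w = - exp (-2 * M w) / w\<^sup>2"
    using classB_deriv_exp_form[OF assms(2,3)] by blast
  have "continuous_on {0..<1} q" using P by (simp add: classP_def)
  then obtain y y' where ode: "ode_sol q y y'" using ode_sol_exists by blast
  with P obtain L where ypos: "\<forall>x\<in>{0<..<1}. 0 < y x"
    and L: "((\<lambda>x. ereal (y' x / y x)) \<longlongrightarrow> L) (at_left 1)" "ereal ((1 + \<alpha>) / 2) \<le> L"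
    unfolding classP_def by blast
  have riccati: "riccati_ineq M q z" if "z \<in> ball 0 1 - {0}" for z
    using M df that S[rule_format, OF that] by (rule schwarzian_bound_imp_riccati_ineq)
  have Re_bound: "(1 + \<alpha>) / 2 \<le> 1 + Re (z * deriv M z)" if "z \<in> ball 0 1" for z
  proof (rule lower_limit_le_of_mult_bound[OF L])
    have "cmod z < 1" using that by simp
    then have "\<forall>\<^sub>F r in at_left 1. r \<in> {cmod z<..<1}" by (rule eventually_at_left_real)
    then show "\<forall>\<^sub>F r in at_left 1. r * (y' r / y r) \<le> 1 + Re (z * deriv M z)"
      by eventually_elim (use Re_zderiv_lower_bound[OF M ode ypos riccati] in auto)
  qed
  show ?thesis
    unfolding classBC_def
  proof (intro conjI ballI assms(2,3))
    fix z :: complex assume z: "z \<in> ball 0 1 - {0}"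
    have "1 + z * deriv (deriv f) z / deriv f z = 1 + z * (deriv (deriv f) z / deriv f z)"
      by simp
    also have "deriv (deriv f) z / deriv f z = -2 * deriv M z - 2 / z"
      using M df z by (rule schwarzian_exp_form(1))
    also have "1 + z * (-2 * deriv M z - 2 / z) = -1 - 2 * (z * deriv M z)"
      using z by (simp add: field_simps)
    finally have "Re (1 + z * deriv (deriv f) z / deriv f z) = Re (-1 - 2 * (z * deriv M z))"
      by (rule arg_cong)
    also have "\<dots> = -1 - 2 * Re (z * deriv M z)" by simp
    also have "\<dots> \<le> - \<alpha>" using Re_bound[of z] z by simp
    finally show "Re (1 + z * deriv (deriv f) z / deriv f z) \<le> - \<alpha>" .
  qed
qed

section \<open>The extremal function\<close>

lemma holomorphic_divide_by_z:
  fixes h :: "complex \<Rightarrow> complex"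
  assumes "h holomorphic_on UNIV" "h 0 = 0"
  obtains g where "g holomorphic_on UNIV" "g 0 = deriv h 0" "\<And>z. z \<noteq> 0 \<Longrightarrow> g z = h z / z"
proof
  show "(\<lambda>z. if z = 0 then deriv h 0 else (h z - h 0) / (z - 0)) holomorphic_on UNIV"
    using assms(1) by (rule pole_lemma_open) simp
qed (use assms(2) in auto)

lemma sin_mult_nonzero:
  fixes \<sigma> z :: complex
  assumes "cmod \<sigma> \<le> pi" "z \<in> ball 0 1 - {0}" "\<sigma> \<noteq> 0"
  shows "sin (\<sigma> * z) \<noteq> 0"
proof
  assume "sin (\<sigma> * z) = 0"
  then obtain n :: int where n: "\<sigma> * z = of_real (n * pi)" by (auto simp: sin_eq_0)
  with assms have "n \<noteq> 0" by auto
  then have "pi \<le> \<bar>real_of_int n\<bar> * pi" by simp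
  also have "\<dots> = cmod (\<sigma> * z)" unfolding n norm_of_real by (simp add: abs_mult)
  also have "\<dots> < cmod \<sigma> * 1"
    unfolding norm_mult using assms by (intro mult_strict_left_mono) auto
  also have "\<dots> \<le> pi" using assms by simp
  finally show False by simp
qed

lemma classB_cot:
  fixes \<sigma> :: complex
  assumes \<sigma>: "\<sigma> \<noteq> 0" "cmod \<sigma> \<le> pi"
  shows "classB (\<lambda>z. \<sigma> * cos (\<sigma> * z) / sin (\<sigma> * z))"
proof -
  define N where "N z = \<sigma> * z * cos (\<sigma> * z) - sin (\<sigma> * z)" for z
  have "(N has_field_derivative - \<sigma> * 0 * sin (\<sigma> * 0) * \<sigma>) (at 0)"
    unfolding N_def by (rule derivative_eq_intros refl | simp add: algebra_simps)+
  then have "deriv N 0 = 0" by (simp add: DERIV_imp_deriv)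
  moreover have "N holomorphic_on UNIV" unfolding N_def by (intro holomorphic_intros)
  ultimately obtain N1 where N1: "N1 holomorphic_on UNIV" "N1 0 = 0" "\<And>z. z \<noteq> 0 \<Longrightarrow> N1 z = N z / z"
    using holomorphic_divide_by_z[of N] by (auto simp: N_def)
  then obtain N2 where N2: "N2 holomorphic_on UNIV" "\<And>z. z \<noteq> 0 \<Longrightarrow> N2 z = N z / z / z"
    using holomorphic_divide_by_z[of N1] by metis
  have "(\<lambda>z. sin (\<sigma> * z)) holomorphic_on UNIV" by (intro holomorphic_intros)
  moreover have "((\<lambda>z. sin (\<sigma> * z)) has_field_derivative cos (\<sigma> * 0) * \<sigma>) (at 0)"
    by (auto intro!: derivative_eq_intros)
  ultimately obtain D where D: "D holomorphic_on UNIV" "D 0 = \<sigma>" "\<And>z. z \<noteq> 0 \<Longrightarrow> D z = sin (\<sigma> * z) / z"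
    using holomorphic_divide_by_z[of "\<lambda>z. sin (\<sigma> * z)"] by (auto simp: DERIV_imp_deriv)
  have "D z \<noteq> 0" if "z \<in> ball 0 1" for z
    using that D(2,3) sin_mult_nonzero[OF \<sigma>(2) _ \<sigma>(1), of z] \<sigma>(1) by (cases "z = 0") auto
  then have "(\<lambda>z. N2 z / D z) holomorphic_on ball 0 1"
    by (intro holomorphic_on_divide holomorphic_on_subset[OF N2(1)] holomorphic_on_subset[OF D(1)]) auto
  moreover have "\<sigma> * cos (\<sigma> * z) / sin (\<sigma> * z) = 1 / z + N2 z / D z" if "z \<in> ball 0 1 - {0}" for z
    using that sin_mult_nonzero[OF \<sigma>(2) that \<sigma>(1)] by (auto simp: N2(2) D(3) N_def field_simps)
  ultimately show ?thesis unfolding classB_def by blast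
qed

lemma cot_schwarzian:
  fixes \<sigma> z :: complex
  assumes "sin (\<sigma> * z) \<noteq> 0"
  shows "deriv (\<lambda>w. \<sigma> * cos (\<sigma> * w) / sin (\<sigma> * w)) z = - \<sigma>\<^sup>2 / (sin (\<sigma> * z))\<^sup>2"
    and "deriv (deriv (\<lambda>w. \<sigma> * cos (\<sigma> * w) / sin (\<sigma> * w))) z
          / deriv (\<lambda>w. \<sigma> * cos (\<sigma> * w) / sin (\<sigma> * w)) z
        = -2 * \<sigma> * cos (\<sigma> * z) / sin (\<sigma> * z)"
    and "schwarzian (\<lambda>w. \<sigma> * cos (\<sigma> * w) / sin (\<sigma> * w)) z = 2 * \<sigma>\<^sup>2"
proof -
  define S where "S = {w. sin (\<sigma> * w) \<noteq> 0}"
  have S: "open S" "z \<in> S"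
    unfolding S_def using assms by (intro open_Collect_neq continuous_intros, simp)+
  have pyth: "sin w * sin w = 1 - cos w * cos w" for w :: complex
    using sin_squared_eq[of w] by (simp add: power2_eq_square)
  let ?f1 = "\<lambda>w. - \<sigma>\<^sup>2 / (sin (\<sigma> * w))\<^sup>2"
  let ?f2 = "\<lambda>w. 2 * \<sigma> ^ 3 * cos (\<sigma> * w) / (sin (\<sigma> * w)) ^ 3"
  let ?R = "\<lambda>w. -2 * \<sigma> * cos (\<sigma> * w) / sin (\<sigma> * w)"
  have f1: "((\<lambda>w. \<sigma> * cos (\<sigma> * w) / sin (\<sigma> * w)) has_field_derivative ?f1 w) (at w)"
    if "w \<in> S" for w
    using that unfolding S_def
    by (auto intro!: derivative_eq_intros simp: field_simps power2_eq_square pyth)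
  have df: "deriv (\<lambda>w. \<sigma> * cos (\<sigma> * w) / sin (\<sigma> * w)) w = ?f1 w" if "w \<in> S" for w
    using f1[OF that] by (rule DERIV_imp_deriv)
  then show "deriv (\<lambda>w. \<sigma> * cos (\<sigma> * w) / sin (\<sigma> * w)) z = - \<sigma>\<^sup>2 / (sin (\<sigma> * z))\<^sup>2"
    using S(2) .
  have f2: "(?f1 has_field_derivative ?f2 w) (at w)" if "w \<in> S" for w
    using that unfolding S_def
    by (auto intro!: derivative_eq_intros simp: field_simps power2_eq_square power3_eq_cube)
  have R: "?f2 w / ?f1 w = ?R w" if "w \<in> S" for w
    using that unfolding S_def by (auto simp: field_simps power2_eq_square power3_eq_cube)
  have R': "(?R has_field_derivative 2 * \<sigma>\<^sup>2 / (sin (\<sigma> * z))\<^sup>2) (at z)"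
    using assms by (auto intro!: derivative_eq_intros simp: field_simps power2_eq_square pyth)
  note eqI = S df f2 R R'
  show "deriv (deriv (\<lambda>w. \<sigma> * cos (\<sigma> * w) / sin (\<sigma> * w))) z
          / deriv (\<lambda>w. \<sigma> * cos (\<sigma> * w) / sin (\<sigma> * w)) z = ?R z"
    using eqI by (rule schwarzian_eqI(1))
  have "schwarzian (\<lambda>w. \<sigma> * cos (\<sigma> * w) / sin (\<sigma> * w)) z
      = 2 * \<sigma>\<^sup>2 / (sin (\<sigma> * z))\<^sup>2 - (?R z)\<^sup>2 / 2"
    using eqI by (rule schwarzian_eqI(2))
  also have "\<dots> = 2 * \<sigma>\<^sup>2 * (1 - (cos (\<sigma> * z))\<^sup>2) / (sin (\<sigma> * z))\<^sup>2"
    using assms by (simp add: field_simps power2_eq_square)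
  also have "1 - (cos (\<sigma> * z))\<^sup>2 = (sin (\<sigma> * z))\<^sup>2" by (simp add: sin_squared_eq)
  also have "2 * \<sigma>\<^sup>2 * (sin (\<sigma> * z))\<^sup>2 / (sin (\<sigma> * z))\<^sup>2 = 2 * \<sigma>\<^sup>2"
    using assms by simp
  finally show "schwarzian (\<lambda>w. \<sigma> * cos (\<sigma> * w) / sin (\<sigma> * w)) z = 2 * \<sigma>\<^sup>2" .
qed

lemma exists_mult_cot_eq:
  fixes m :: real
  assumes m: "0 \<le> m" "m < 1"
  obtains s where "0 < s" "s \<le> pi / 2" "s * cos s / sin s = m"
proof -
  define a where "a = arccos m"
  have a: "0 < a" "a \<le> pi / 2" "cos a = m"
    using m arccos_less_arccos[of m 1] arccos_le_pi2[of m] by (auto simp: a_def)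
  then have "0 < sin a" by (intro sin_gt_zero) auto
  moreover have "m * sin a \<le> m * a" using a m by (intro mult_left_mono sin_x_le_x) auto
  ultimately have "m \<le> a * cos a / sin a"
    using a by (simp add: le_divide_eq mult.commute)
  moreover have "(pi / 2) * cos (pi / 2) / sin (pi / 2) \<le> m" using m by simp
  moreover have "continuous_on {a..pi / 2} (\<lambda>x. x * cos x / sin x)"
  proof (intro continuous_intros ballI)
    fix x assume "x \<in> {a..pi / 2}"
    with a show "sin x \<noteq> 0" using sin_gt_zero[of x] by force
  qed
  ultimately obtain s where "a \<le> s" "s \<le> pi / 2" "s * cos s / sin s = m"
    using IVT2'[where f="\<lambda>x. x * cos x / sin x"] a(2) by blast
  with a show ?thesis by (intro that) auto
qed

lemma ode_sol_const_square:
  fixes s :: real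
  assumes ode: "ode_sol (\<lambda>_. s\<^sup>2) y y'" and "s \<noteq> 0" and x: "x \<in> {0..<1}"
  shows "y x = sin (s * x) / s" "y' x = cos (s * x)"
proof -
  define E where "E x = (y' x - cos (s * x))\<^sup>2 + s\<^sup>2 * (y x - sin (s * x) / s)\<^sup>2" for x
  have "\<exists>c. \<forall>x\<in>{0..<1}. E x = c"
  proof (rule has_field_derivative_zero_constant)
    fix x :: real assume "x \<in> {0..<1}"
    with ode have dy: "(y has_real_derivative y' x) (at x within {0..<1})"
      and dy': "(y' has_real_derivative - s\<^sup>2 * y x) (at x within {0..<1})"
      by (auto simp: ode_sol_def)
    have "(E has_real_derivative
        2 * (y' x - cos (s * x)) * (- s\<^sup>2 * y x + s * sin (s * x))
        + s\<^sup>2 * (2 * (y x - sin (s * x) / s) * (y' x - cos (s * x)))) (at x within {0..<1})"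
      unfolding E_def using \<open>s \<noteq> 0\<close>
      by (auto intro!: derivative_eq_intros dy dy' simp: power2_eq_square field_simps)
    then show "(E has_real_derivative 0) (at x within {0..<1})"
      using \<open>s \<noteq> 0\<close> by (simp add: field_simps power2_eq_square)
  qed simp
  moreover have "E 0 = 0" using ode by (simp add: E_def ode_sol_def)
  ultimately have "E x = 0" using x by force
  then have "(y' x - cos (s * x))\<^sup>2 = 0 \<and> s\<^sup>2 * (y x - sin (s * x) / s)\<^sup>2 = 0"
    unfolding E_def by (simp add: add_nonneg_eq_0_iff)
  then show "y x = sin (s * x) / s" "y' x = cos (s * x)" using \<open>s \<noteq> 0\<close> by simp_all
qed

lemma classP_const_square:
  fixes s \<beta> :: real
  assumes s: "0 < s" "s < pi" and \<beta>: "\<beta> \<le> s * cos s / sin s"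
  shows "classP \<beta> (\<lambda>_. s\<^sup>2)"
  unfolding classP_def
proof (intro conjI allI impI ballI)
  fix y y' assume ode: "ode_sol (\<lambda>_. s\<^sup>2) y y'"
  note sol = ode_sol_const_square[OF ode less_imp_neq[OF s(1), symmetric]]
  show "0 < y x" if x: "x \<in> {0<..<1}" for x
  proof -
    have "s * x < s * 1" using x s by (intro mult_strict_left_mono) auto
    then have "0 < s * x" "s * x < pi" using x s by (simp, linarith)
    then show ?thesis using sol(1)[of x] x s by (simp add: sin_gt_zero)
  qed
  have "sin s \<noteq> 0" using s sin_gt_zero[of s] by simp
  then have "((\<lambda>x. s * cos (s * x) / sin (s * x)) \<longlongrightarrow> s * cos (s * 1) / sin (s * 1)) (at_left 1)"
    by (intro tendsto_intros) auto
  moreover have "\<forall>\<^sub>F x in at_left (1::real). x \<in> {0<..<1}" by (rule eventually_at_left_real) simp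
  then have "\<forall>\<^sub>F x in at_left 1. s * cos (s * x) / sin (s * x) = y' x / y x"
    by eventually_elim (use sol s in simp)
  ultimately have "((\<lambda>x. y' x / y x) \<longlongrightarrow> s * cos s / sin s) (at_left 1)"
    by (simp add: tendsto_cong)
  with \<beta> show "\<exists>L. ((\<lambda>x. ereal (y' x / y x)) \<longlongrightarrow> L) (at_left 1) \<and> ereal \<beta> \<le> L"
    by (intro exI[of _ "ereal (s * cos s / sin s)"]) auto
qed simp_all

lemma cot_not_classBC:
  fixes s \<alpha> :: real
  assumes s: "0 < s" "s < pi" and lim: "- \<alpha> < 1 - 2 * (s * cos s / sin s)"
  shows "\<not> classBC \<alpha> (\<lambda>z. of_real s * cos (of_real s * z) / sin (of_real s * z))"
proof
  define f where "f z = of_real s * cos (of_real s * z) / sin (of_real s * z)" for z :: complex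
  define \<phi> where "\<phi> t = 1 - 2 * t * s * cos (s * t) / sin (s * t)" for t
  assume "classBC \<alpha> (\<lambda>z. of_real s * cos (of_real s * z) / sin (of_real s * z))"
  then have BC: "classBC \<alpha> f" by (simp add: f_def[abs_def])
  have "sin s \<noteq> 0" using s sin_gt_zero[of s] by simp
  then have "(\<phi> \<longlongrightarrow> 1 - 2 * 1 * s * cos (s * 1) / sin (s * 1)) (at_left 1)"
    unfolding \<phi>_def by (intro tendsto_intros) auto
  then have "\<forall>\<^sub>F t in at_left 1. - \<alpha> < \<phi> t"
    using lim by (auto intro: order_tendstoD(1) simp: mult.assoc)
  moreover have "\<forall>\<^sub>F t in at_left (1::real). t \<in> {0<..<1}" by (rule eventually_at_left_real) simp
  ultimately obtain t where t: "- \<alpha> < \<phi> t" "t \<in> {0<..<1}"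
    using eventually_happens'[OF trivial_limit_at_left_real eventually_conj] by blast
  then have z: "complex_of_real t \<in> ball 0 1 - {0}" by simp
  have "sin (complex_of_real s * of_real t) \<noteq> 0"
    using sin_mult_nonzero[OF _ z, of "of_real s"] s by simp
  from cot_schwarzian(2)[OF this]
  have "deriv (deriv f) t / deriv f t = of_real (-2 * s * cos (s * t) / sin (s * t))"
    unfolding f_def[abs_def] of_real_mult[symmetric] cos_of_real sin_of_real by simp
  then have "Re (1 + of_real t * (deriv (deriv f) t / deriv f t)) = \<phi> t"
    by (simp add: \<phi>_def)
  moreover have "Re (1 + of_real t * deriv (deriv f) t / deriv f t) \<le> - \<alpha>"
    using BC z unfolding classBC_def by blast
  ultimately show False using t by simp
qed

theorem schwarzian_bound_constant_sharp:
  fixes \<alpha> \<beta> :: real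
  assumes "0 \<le> \<alpha>" "\<alpha> < 1" "\<beta> < (1 + \<alpha>) / 2"
  shows "\<exists>q f. classP \<beta> q \<and> classB f \<and> loc_univalent f \<and>
            (\<forall>z\<in>ball 0 1 - {0}. cmod (schwarzian f z) \<le> 2 * q (cmod z)) \<and>
            \<not> classBC \<alpha> f"
proof -
  \<comment> \<open>\<open>s cot s\<close> only takes values in \<open>[0, 1)\<close> for \<open>s \<in> (0, \<pi>/2]\<close>, hence the clamp at \<open>0\<close>.\<close>
  define m where "m = max \<beta> 0"
  have m: "0 \<le> m" "m < 1" "\<beta> \<le> m" "- \<alpha> < 1 - 2 * m"
    using assms by (auto simp: m_def max_def)
  obtain s where s: "0 < s" "s \<le> pi / 2" "s * cos s / sin s = m"
    using exists_mult_cot_eq[OF m(1,2)] by blast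
  define \<sigma> where "\<sigma> = complex_of_real s"
  have \<sigma>: "\<sigma> \<noteq> 0" "cmod \<sigma> \<le> pi" using s by (simp_all add: \<sigma>_def)
  have sin_nz: "sin (\<sigma> * z) \<noteq> 0" if "z \<in> ball 0 1 - {0}" for z
    using sin_mult_nonzero[OF \<sigma>(2) that \<sigma>(1)] .
  have "classP \<beta> (\<lambda>_. s\<^sup>2)" using classP_const_square[of s \<beta>] s m by simp
  moreover have "classB (\<lambda>z. \<sigma> * cos (\<sigma> * z) / sin (\<sigma> * z))" using \<sigma> by (rule classB_cot)
  moreover have "loc_univalent (\<lambda>z. \<sigma> * cos (\<sigma> * z) / sin (\<sigma> * z))"
    unfolding loc_univalent_def using cot_schwarzian(1)[OF sin_nz] \<sigma>(1) sin_nz by simp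
  moreover have "\<forall>z\<in>ball 0 1 - {0}. cmod (schwarzian (\<lambda>z. \<sigma> * cos (\<sigma> * z) / sin (\<sigma> * z)) z) \<le> 2 * s\<^sup>2"
    using cot_schwarzian(3)[OF sin_nz] by (simp add: \<sigma>_def norm_mult norm_power)
  moreover have "\<not> classBC \<alpha> (\<lambda>z. \<sigma> * cos (\<sigma> * z) / sin (\<sigma> * z))"
    unfolding \<sigma>_def using s m pi_gt_zero by (intro cot_not_classBC) auto
  ultimately show ?thesis by blast
qed

theorem theorem2p7:
  fixes \<alpha> :: real
  assumes "0 \<le> \<alpha>" and "\<alpha> < 1"
  shows "(\<forall>q f. classP ((1 + \<alpha>) / 2) q \<and> classB f \<and> loc_univalent f \<and>
            (\<forall>z\<in>ball 0 1 - {0}. cmod (schwarzian f z) \<le> 2 * q (cmod z))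
            \<longrightarrow> classBC \<alpha> f)
       \<and> (\<forall>\<beta><(1 + \<alpha>) / 2. \<exists>q f. classP \<beta> q \<and> classB f \<and> loc_univalent f \<and>
            (\<forall>z\<in>ball 0 1 - {0}. cmod (schwarzian f z) \<le> 2 * q (cmod z)) \<and>
            \<not> classBC \<alpha> f)"
  using classBC_if_schwarzian_bound schwarzian_bound_constant_sharp[OF assms] by blast

end
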